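(* Let $E$ be a Banach space, $P$ a metric space, and $F:[0,+\infty)\times E\times P\to E$ continuous, continuous uniformly with respect to the first variable, such that $\{F(t,\bar u,\mu)\mid t\geq0\}$ is relatively compact for all $\bar u\in E$, $\mu\in P$, and such that there is a continuous $\widehat F:E\times P\to E$ with $\widehat F(\bar u,\mu)=\lim_{T\to+\infty,\ \bar v\to\bar u,\ \nu\to\mu}\frac1T\int_0^TF(\tau+h,\bar v,\nu)\,d\tau$ for all $\bar u\in E$, $\mu\in P$, $h>0$, uniformly with respect to $h>0$. Let $Q\subset E$ be compact. Then for any $(T_n)$ in $(0,+\infty)$ with $T_n\to+\infty$ and $(\mu_n)$ in $P$ with $\mu_n\to\mu_0$, the convergence $\lim_{n\to+\infty}\frac1{T_n}\int_0^{T_n}F(\tau+h,\bar w,\mu_n)\,d\tau=\widehat F(\bar w,\mu_0)$ is uniform with respect to $\bar w\in Q$ and $h>0$. *)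

theory Defs
  imports "HOL-Analysis.Analysis"
begin

end

theory Submission
  imports Defs
begin

text \<open>Continuity of \<open>Fhat\<close> and the local uniformity in the averaging hypothesis make the
  averages \<open>\<epsilon>\<close>-close to \<open>Fhat w \<mu>0\<close> on a ball around each point of \<open>Q\<close>, uniformly in \<open>h\<close>,
  eventually in \<open>n\<close>; compactness of \<open>Q\<close> lets finitely many such balls cover \<open>Q\<close>.\<close>

lemma uniform_on_compact_if_locally_uniform:
  fixes g :: "'i \<Rightarrow> 'h \<Rightarrow> 'x::metric_space \<Rightarrow> 'a::metric_space" and L :: "'x \<Rightarrow> 'a"
  assumes "compact Q" and L_cont: "continuous_on Q L"
    and local: "\<And>u \<epsilon>. u \<in> Q \<Longrightarrow> \<epsilon> > 0 \<Longrightarrow>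
        \<exists>\<delta>>0. eventually (\<lambda>i. \<forall>h\<in>H. \<forall>v. dist v u < \<delta> \<longrightarrow> dist (g i h v) (L u) < \<epsilon>) F"
    and "\<epsilon> > 0"
  shows "eventually (\<lambda>i. \<forall>h\<in>H. \<forall>w\<in>Q. dist (g i h w) (L w) < \<epsilon>) F"
proof -
  have "\<forall>u\<in>Q. \<exists>\<delta>>0. eventually (\<lambda>i. \<forall>h\<in>H. \<forall>v. dist v u < \<delta> \<longrightarrow> dist (g i h v) (L u) < \<epsilon>/2) F
          \<and> (\<forall>w\<in>Q. dist w u < \<delta> \<longrightarrow> dist (L w) (L u) < \<epsilon>/2)"
  proof
    fix u assume "u \<in> Q"
    obtain \<delta>1 where "\<delta>1 > 0"
      and ev: "eventually (\<lambda>i. \<forall>h\<in>H. \<forall>v. dist v u < \<delta>1 \<longrightarrow> dist (g i h v) (L u) < \<epsilon>/2) F"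
      using local[OF \<open>u \<in> Q\<close>, of "\<epsilon>/2"] \<open>\<epsilon> > 0\<close> by auto
    obtain \<delta>2 where "\<delta>2 > 0" and "\<forall>w\<in>Q. dist w u < \<delta>2 \<longrightarrow> dist (L w) (L u) < \<epsilon>/2"
      using L_cont \<open>u \<in> Q\<close> \<open>\<epsilon> > 0\<close> unfolding continuous_on_iff by (metis half_gt_zero)
    moreover from ev
    have "eventually (\<lambda>i. \<forall>h\<in>H. \<forall>v. dist v u < min \<delta>1 \<delta>2 \<longrightarrow> dist (g i h v) (L u) < \<epsilon>/2) F"
      by (rule eventually_mono) simp
    ultimately show "\<exists>\<delta>>0. eventually (\<lambda>i. \<forall>h\<in>H. \<forall>v. dist v u < \<delta> \<longrightarrow> dist (g i h v) (L u) < \<epsilon>/2) F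
          \<and> (\<forall>w\<in>Q. dist w u < \<delta> \<longrightarrow> dist (L w) (L u) < \<epsilon>/2)"
      using \<open>\<delta>1 > 0\<close> by (intro exI[of _ "min \<delta>1 \<delta>2"]) auto
  qed
  then obtain \<delta> where "\<forall>u\<in>Q. \<delta> u > 0
      \<and> eventually (\<lambda>i. \<forall>h\<in>H. \<forall>v. dist v u < \<delta> u \<longrightarrow> dist (g i h v) (L u) < \<epsilon>/2) F
      \<and> (\<forall>w\<in>Q. dist w u < \<delta> u \<longrightarrow> dist (L w) (L u) < \<epsilon>/2)"
    unfolding bchoice_iff by blast
  then have \<delta>_pos: "\<And>u. u \<in> Q \<Longrightarrow> \<delta> u > 0"
    and close: "\<And>u. u \<in> Q \<Longrightarrow>
          eventually (\<lambda>i. \<forall>h\<in>H. \<forall>v. dist v u < \<delta> u \<longrightarrow> dist (g i h v) (L u) < \<epsilon>/2) F"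
    and L_close: "\<And>u w. u \<in> Q \<Longrightarrow> w \<in> Q \<Longrightarrow> dist w u < \<delta> u \<Longrightarrow> dist (L w) (L u) < \<epsilon>/2"
    by blast+
  obtain K where "K \<subseteq> Q" "finite K" and cover: "Q \<subseteq> (\<Union>u\<in>K. ball u (\<delta> u))"
    using compactE_image[OF \<open>compact Q\<close>, of Q "\<lambda>u. ball u (\<delta> u)"] \<delta>_pos by force
  have "eventually (\<lambda>i. \<forall>u\<in>K. \<forall>h\<in>H. \<forall>v. dist v u < \<delta> u \<longrightarrow> dist (g i h v) (L u) < \<epsilon>/2) F"
    using \<open>finite K\<close> by (rule eventually_ball_finite) (use \<open>K \<subseteq> Q\<close> close in blast)
  then show ?thesis
  proof (rule eventually_mono, intro ballI)
    fix i h w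
    assume near: "\<forall>u\<in>K. \<forall>h\<in>H. \<forall>v. dist v u < \<delta> u \<longrightarrow> dist (g i h v) (L u) < \<epsilon>/2"
      and "h \<in> H" "w \<in> Q"
    then obtain u where "u \<in> K" "dist w u < \<delta> u"
      using cover by (auto simp: dist_commute)
    then have "dist (g i h w) (L u) < \<epsilon>/2" "dist (L w) (L u) < \<epsilon>/2"
      using near \<open>h \<in> H\<close> L_close \<open>K \<subseteq> Q\<close> \<open>w \<in> Q\<close> by auto
    then show "dist (g i h w) (L w) < \<epsilon>"
      using dist_triangle2[of "g i h w" "L w" "L u"] by linarith
  qed
qed

lemma eventually_locally_close_along:
  fixes A :: "real \<Rightarrow> 'h \<Rightarrow> 'x::metric_space \<Rightarrow> 'p::metric_space \<Rightarrow> 'a::metric_space"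
  assumes close: "\<exists>T0>0. \<exists>\<delta>>0. \<forall>h\<in>H. \<forall>T\<ge>T0. \<forall>v \<nu>.
                    dist v u < \<delta> \<and> dist \<nu> \<mu>0 < \<delta> \<longrightarrow> dist (A T h v \<nu>) c < \<epsilon>"
    and T_lim: "filterlim T at_top F" and \<mu>_lim: "(\<mu> \<longlongrightarrow> \<mu>0) F"
  shows "\<exists>\<delta>>0. eventually (\<lambda>i. \<forall>h\<in>H. \<forall>v. dist v u < \<delta> \<longrightarrow> dist (A (T i) h v (\<mu> i)) c < \<epsilon>) F"
proof -
  obtain T0 \<delta> where "\<delta> > 0" and A_close: "\<forall>h\<in>H. \<forall>T\<ge>T0. \<forall>v \<nu>.
      dist v u < \<delta> \<and> dist \<nu> \<mu>0 < \<delta> \<longrightarrow> dist (A T h v \<nu>) c < \<epsilon>"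
    using close by blast
  have "eventually (\<lambda>i. T i \<ge> T0) F"
    using T_lim by (simp add: filterlim_at_top)
  moreover have "eventually (\<lambda>i. dist (\<mu> i) \<mu>0 < \<delta>) F"
    using \<mu>_lim \<open>\<delta> > 0\<close> by (rule tendstoD)
  ultimately have "eventually (\<lambda>i. \<forall>h\<in>H. \<forall>v. dist v u < \<delta> \<longrightarrow> dist (A (T i) h v (\<mu> i)) c < \<epsilon>) F"
    by eventually_elim (use A_close in blast)
  with \<open>\<delta> > 0\<close> show ?thesis by blast
qed

theorem lemma2p4:
  fixes F :: "real \<Rightarrow> 'e::banach \<Rightarrow> 'p::metric_space \<Rightarrow> 'e"
    and Fhat :: "'e \<Rightarrow> 'p \<Rightarrow> 'e"
    and Q :: "'e set"
  assumes F_cont: "continuous_on ({0..} \<times> UNIV \<times> UNIV) (\<lambda>(t, u, \<mu>). F t u \<mu>)"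
    and F_unif_cont: "\<And>u \<mu> \<epsilon>. \<epsilon> > 0 \<Longrightarrow> \<exists>\<delta>>0. \<forall>t\<ge>0. \<forall>v \<nu>.
            dist v u < \<delta> \<and> dist \<nu> \<mu> < \<delta> \<longrightarrow> dist (F t v \<nu>) (F t u \<mu>) < \<epsilon>"
    and F_relcompact: "\<And>u \<mu>. compact (closure ((\<lambda>t. F t u \<mu>) ` {0..}))"
    and Fhat_cont: "continuous_on UNIV (\<lambda>(u, \<mu>). Fhat u \<mu>)"
    and Fhat_avg: "\<And>u \<mu> \<epsilon>. \<epsilon> > 0 \<Longrightarrow> \<exists>T0>0. \<exists>\<delta>>0. \<forall>h>0. \<forall>T\<ge>T0. \<forall>v \<nu>.
            dist v u < \<delta> \<and> dist \<nu> \<mu> < \<delta> \<longrightarrow>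
            norm ((1 / T) *\<^sub>R integral {0..T} (\<lambda>\<tau>. F (\<tau> + h) v \<nu>) - Fhat u \<mu>) < \<epsilon>"
    and Q_compact: "compact Q"
  shows "\<forall>(Ts :: nat \<Rightarrow> real) (\<mu>s :: nat \<Rightarrow> 'p) \<mu>0.
           (\<forall>n. Ts n > 0) \<longrightarrow> filterlim Ts at_top sequentially \<longrightarrow> \<mu>s \<longlonglongrightarrow> \<mu>0 \<longrightarrow>
           (\<forall>\<epsilon>>0. \<exists>N. \<forall>n\<ge>N. \<forall>w\<in>Q. \<forall>h>0.
              norm ((1 / Ts n) *\<^sub>R integral {0..Ts n} (\<lambda>\<tau>. F (\<tau> + h) w (\<mu>s n)) - Fhat w \<mu>0) < \<epsilon>)"
proof (intro allI impI)
  fix Ts :: "nat \<Rightarrow> real" and \<mu>s :: "nat \<Rightarrow> 'p" and \<mu>0 :: 'p and \<epsilon> :: real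
  assume Ts_lim: "filterlim Ts at_top sequentially" and \<mu>s_lim: "\<mu>s \<longlonglongrightarrow> \<mu>0"
    and "\<epsilon> > 0"
  define avg where "avg T h v \<nu> = (1 / T) *\<^sub>R integral {0..T} (\<lambda>\<tau>. F (\<tau> + h) v \<nu>)"
    for T h v \<nu>
  have Fhat_cont_Q: "continuous_on Q (\<lambda>w. Fhat w \<mu>0)"
    using continuous_on_compose2[OF Fhat_cont, of Q "\<lambda>w. (w, \<mu>0)"]
    by (simp add: continuous_on_Pair)
  have avg_locally_close: "\<exists>\<delta>>0. eventually (\<lambda>n. \<forall>h\<in>{0<..}. \<forall>v. dist v u < \<delta> \<longrightarrow>
                   dist (avg (Ts n) h v (\<mu>s n)) (Fhat u \<mu>0) < e) sequentially"
    if "e > 0" for u e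
    by (rule eventually_locally_close_along[OF _ Ts_lim \<mu>s_lim])
       (use Fhat_avg[OF \<open>e > 0\<close>, of u \<mu>0] in \<open>simp only: avg_def dist_norm Ball_def greaterThan_iff\<close>)
  have "eventually (\<lambda>n. \<forall>h\<in>{0<..}. \<forall>w\<in>Q.
                     dist (avg (Ts n) h w (\<mu>s n)) (Fhat w \<mu>0) < \<epsilon>) sequentially"
    by (rule uniform_on_compact_if_locally_uniform[OF Q_compact Fhat_cont_Q avg_locally_close \<open>\<epsilon> > 0\<close>])
  then show "\<exists>N. \<forall>n\<ge>N. \<forall>w\<in>Q. \<forall>h>0.
      norm ((1 / Ts n) *\<^sub>R integral {0..Ts n} (\<lambda>\<tau>. F (\<tau> + h) w (\<mu>s n)) - Fhat w \<mu>0) < \<epsilon>"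
    by (auto simp: eventually_sequentially avg_def dist_norm)
qed

end
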